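(* Let $\zeta=\zeta_0r_0+\dots+\zeta_mr_m$ and $1\le j\le n$. Then $\lambda\mapsto\mathrm{HC}([y_j,x_j])(\lambda)$ is a polynomial on $\mathfrak{h}^*$ of degree at most $m$ whose homogeneous component of degree $m$ (its highest term) is \[ \zeta_m\sum_{\mathbf{p}}(\mathbf{p}_j+1)\prod_{i=1}^n\lambda_i^{\mathbf{p}_i}, \] the sum being over all $\mathbf{p}=(\mathbf{p}_1,\dots,\mathbf{p}_n)\in\mathbb{Z}_{\ge0}^n$ with $\mathbf{p}_1+\dots+\mathbf{p}_n=m$.
   Context: Fix $n\ge1$; $e_{ij}$ matrix units of $\mathfrak{gl}_n$; $V$ with basis $y_1,\dots,y_n$, $e_{ij}y_k=\delta_{jk}y_i$; $V^*$ dual with dual basis $x_1,\dots,x_n$. Identify $S(\mathfrak{gl}_n)$ with polynomial functions of $A\in\mathfrak{gl}_n$ via the trace form; $\mathrm{Sym}$ is symmetrization $S(\mathfrak{gl}_n)\to U(\mathfrak{gl}_n)$. For $j\ge0$, $r_j(y,x)\in U(\mathfrak{gl}_n)$ is $\mathrm{Sym}$ of the coefficient of $\tau^j$ in $(x,(1-\tau A)^{-1}y)\det(1-\tau A)^{-1}$. $H_\zeta(\mathfrak{gl}_n)$ is the quotient of $U(\mathfrak{gl}_n)\ltimes T(V\oplus V^* )$ by $[x,x']=[y,y']=0$, $[y,x]=\sum_j\zeta_jr_j(y,x)$. $\mathfrak{h}$ is the diagonal subalgebra and $\lambda\in\mathfrak{h}^*$ is identified with $(\lambda_1,\dots,\lambda_n)$,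 $\lambda_i=\lambda(e_{ii})$. $\mathfrak{n}^+=\mathrm{span}(e_{ij}\,(i<j),y_k)$, $\mathfrak{n}^-=\mathrm{span}(e_{ij}\,(i>j),x_k)$, and $\mathrm{HC}:H_\zeta(\mathfrak{gl}_n)\to U(\mathfrak{h})=\mathbb{C}[\mathfrak{h}^*]$ is the projection along $H_\zeta(\mathfrak{gl}_n)=(H_\zeta\mathfrak{n}^++\mathfrak{n}^-H_\zeta)\oplus U(\mathfrak{h})$. *)

theory Defs
  imports "Jordan_Normal_Form.Determinant" "HOL-Computational_Algebra.Formal_Power_Series"
begin

text \<open>Indices are 0-based: the paper's e_{ij} with 1 <= i,j <= n is the letter (i-1, j-1).
 A word w = [(a1,b1),...,(ak,bk)] denotes the product e_{a1 b1} ... e_{ak bk} in U(gl_n).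
 Elements of U(gl_n) are represented by finitely supported coefficient functions on words
 (elements of the free algebra); HC below is well defined on the quotient U(gl_n).\<close>

type_synonym word = "(nat \<times> nat) list"

text \<open>Harish-Chandra projection of a word, evaluated at lambda:
 the U(h)-component of the word w.r.t. U = (n^- U + U n^+) (+) U(h), as polynomial function.
 Rules: u e_ab in U n^+ for a<b; HC(u h) = HC(u) h; for a>b,
 u e_ab = e_ab u + [u, e_ab] with e_ab u in n^- U and
 [e_cd, e_ab] = delta_da e_cb - delta_bc e_ad.\<close>
function hcw :: "(nat \<Rightarrow> complex) \<Rightarrow> word \<Rightarrow> complex" where
  "hcw lam w =
    (if w = [] then 1
     else if fst (last w) < snd (last w) then 0
     else if fst (last w) = snd (last w) then lam (fst (last w)) * hcw lam (butlast w)
     else (\<Sum>i<length (butlast w).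
        (if snd (butlast w ! i) = fst (last w)
         then hcw lam ((butlast w)[i := (fst (butlast w ! i), snd (last w))]) else 0)
      - (if snd (last w) = fst (butlast w ! i)
         then hcw lam ((butlast w)[i := (fst (last w), snd (butlast w ! i))]) else 0)))"
  by pat_completeness auto
termination
  by (relation "measure (\<lambda>(lam, w). length w)") auto

definition HC :: "(word \<Rightarrow> complex) \<Rightarrow> (nat \<Rightarrow> complex) \<Rightarrow> complex" where
  "HC u lam = (\<Sum>w\<in>{w. u w \<noteq> 0}. u w * hcw lam w)"

definition words :: "nat \<Rightarrow> nat \<Rightarrow> word set" where
  "words n d = {w. length w = d \<and> set w \<subseteq> {..<n} \<times> {..<n}}"

text \<open>Coefficient of tau^k in (x_j, (1 - tau A)^{-1} y_j) det(1 - tau A)^{-1}, as a function of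
 the n x n matrix A; (x_j,(1-tau A)^{-1} y_j) = sum_a tau^a (A^a)_{jj}.\<close>
definition coef_fun :: "nat \<Rightarrow> nat \<Rightarrow> nat \<Rightarrow> complex mat \<Rightarrow> complex" where
  "coef_fun n j k A = fps_nth
     (Abs_fps (\<lambda>a. (A ^\<^sub>m a) $$ (j, j)) *
      inverse (det (mat n n (\<lambda>(i, l). (if i = l then 1 else 0) - fps_const (A $$ (i, l)) * fps_X))))
     k"

text \<open>Under the trace-form identification, the generator e_{ab} of S(gl_n) is the coordinate
 function A |-> A_{ba}. For a homogeneous degree-d polynomial f, the coefficient of the word w
 in Sym(f) is (1/d!) D_{w_1}...D_{w_d} f, the iterated partial derivative, computed by the
 polarization formula sum_{S} (-1)^(d-|S|) f(sum_{l in S} E_{b_l a_l}).\<close>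
definition polar :: "nat \<Rightarrow> nat \<Rightarrow> (complex mat \<Rightarrow> complex) \<Rightarrow> word \<Rightarrow> complex" where
  "polar n d f w = (\<Sum>S\<in>Pow {..<d}. (-1) ^ (d - card S) *
      f (mat n n (\<lambda>(i, l). of_nat (card {q\<in>S. w ! q = (l, i)}))))"

text \<open>r_k(y_j, x_j) = Sym(coefficient of tau^k), an element of U(gl_n).\<close>
definition r_elem :: "nat \<Rightarrow> nat \<Rightarrow> nat \<Rightarrow> word \<Rightarrow> complex" where
  "r_elem n j k w = (if w \<in> words n k then polar n k (coef_fun n j k) w / fact k else 0)"

definition bracket_yx :: "nat \<Rightarrow> nat \<Rightarrow> (nat \<Rightarrow> complex) \<Rightarrow> nat \<Rightarrow> word \<Rightarrow> complex" where
  "bracket_yx n m zeta j w = (\<Sum>k\<le>m. zeta k * r_elem n j k w)"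

definition multi_idx :: "nat \<Rightarrow> nat \<Rightarrow> (nat \<Rightarrow> nat) set" where
  "multi_idx n d = {p. (\<forall>i\<ge>n. p i = 0) \<and> sum p {..<n} = d}"

definition poly_deg_lt :: "nat \<Rightarrow> nat \<Rightarrow> ((nat \<Rightarrow> complex) \<Rightarrow> complex) \<Rightarrow> bool" where
  "poly_deg_lt n d F \<longleftrightarrow> (\<exists>c. \<forall>lam. F lam =
      (\<Sum>p\<in>{p. (\<forall>i\<ge>n. p i = 0) \<and> sum p {..<n} < d}. c p * (\<Prod>i<n. lam i ^ p i)))"

end

theory Submission
  imports Defs "HOL-Combinatorics.Permutations"
begin

text \<open>
  The Harish-Chandra projection of a word of length d in the e_ab is a polynomial in lambda of
  degree at most d, and its degree-d part is lambda_a1 ... lambda_ad if the word consists of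
  diagonal letters e_aa only, and 0 otherwise: moving a lowering letter to the left produces
  commutators, i.e. words with one letter fewer. Hence the r_k with k < m contribute only to
  degree < m, and the degree-m part of HC(r_m) only sees the coefficients of r_m on diagonal words.
  These are iterated derivatives of the degree-m generating coefficient restricted to diagonal
  matrices diag(c), where it is the coefficient of tau^m in
  (1 - tau c_j)^-1 prod_i (1 - tau c_i)^-1, namely sum_p (p_j + 1) c^p. Polarizing a monomial c^p
  and pairing it with the diagonal words gives m! lambda^p, which cancels the 1/m! of Sym.
\<close>

section \<open>Polynomial functions of bounded degree\<close>

definition exponents_lt :: "nat \<Rightarrow> nat \<Rightarrow> (nat \<Rightarrow> nat) set" where
  "exponents_lt n d = {p. (\<forall>i\<ge>n. p i = 0) \<and> sum p {..<n} < d}"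

lemma finite_exponents_lt: "finite (exponents_lt n d)"
proof -
  have "p i < d" if "p \<in> exponents_lt n d" "i < n" for p i
  proof -
    have "p i \<le> sum p {..<n}" using that by (intro member_le_sum) auto
    with that show ?thesis by (auto simp: exponents_lt_def)
  qed
  then have "exponents_lt n d \<subseteq>
      {p. \<forall>i. (i \<in> {..<n} \<longrightarrow> p i \<in> {..<d}) \<and> (i \<notin> {..<n} \<longrightarrow> p i = 0)}"
    by (auto simp: exponents_lt_def)
  then show ?thesis by (rule finite_subset) (intro finite_set_of_finite_funs, auto)
qed

lemma poly_deg_lt_iff:
  "poly_deg_lt n d F \<longleftrightarrow>
     (\<exists>c. \<forall>lam. F lam = (\<Sum>p\<in>exponents_lt n d. c p * (\<Prod>i<n. lam i ^ p i)))"
  unfolding poly_deg_lt_def exponents_lt_def by simp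

lemma poly_deg_lt_zero: "poly_deg_lt n d (\<lambda>_. 0)"
  unfolding poly_deg_lt_iff by (intro exI[of _ "\<lambda>_. 0"]) simp

lemma poly_deg_lt_add:
  assumes "poly_deg_lt n d F" and "poly_deg_lt n d G"
  shows "poly_deg_lt n d (\<lambda>lam. F lam + G lam)"
proof -
  obtain a b where "\<And>lam. F lam = (\<Sum>p\<in>exponents_lt n d. a p * (\<Prod>i<n. lam i ^ p i))"
    and "\<And>lam. G lam = (\<Sum>p\<in>exponents_lt n d. b p * (\<Prod>i<n. lam i ^ p i))"
    using assms unfolding poly_deg_lt_iff by blast
  then show ?thesis unfolding poly_deg_lt_iff
    by (intro exI[of _ "\<lambda>p. a p + b p"]) (simp add: distrib_right sum.distrib)
qed

lemma poly_deg_lt_cmult: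
  assumes "poly_deg_lt n d F"
  shows "poly_deg_lt n d (\<lambda>lam. c * F lam)"
proof -
  obtain a where "\<And>lam. F lam = (\<Sum>p\<in>exponents_lt n d. a p * (\<Prod>i<n. lam i ^ p i))"
    using assms unfolding poly_deg_lt_iff by blast
  then show ?thesis unfolding poly_deg_lt_iff
    by (intro exI[of _ "\<lambda>p. c * a p"]) (simp add: sum_distrib_left mult_ac)
qed

lemma poly_deg_lt_diff:
  assumes "poly_deg_lt n d F" and "poly_deg_lt n d G"
  shows "poly_deg_lt n d (\<lambda>lam. F lam - G lam)"
  using poly_deg_lt_add[OF assms(1) poly_deg_lt_cmult[OF assms(2), of "-1"]] by simp

lemma poly_deg_lt_sum:
  assumes "finite S" and "\<And>x. x \<in> S \<Longrightarrow> poly_deg_lt n d (F x)"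
  shows "poly_deg_lt n d (\<lambda>lam. \<Sum>x\<in>S. F x lam)"
  using assms by (induction S rule: finite_induct) (auto intro: poly_deg_lt_zero poly_deg_lt_add)

lemma poly_deg_lt_if_zero:
  assumes "C \<Longrightarrow> poly_deg_lt n d F"
  shows "poly_deg_lt n d (\<lambda>lam. if C then F lam else 0)"
  using assms by (cases C) (simp_all add: poly_deg_lt_zero)

lemma poly_deg_lt_mono:
  assumes "poly_deg_lt n d F" and "d \<le> e"
  shows "poly_deg_lt n e F"
proof -
  obtain a where a: "\<And>lam. F lam = (\<Sum>p\<in>exponents_lt n d. a p * (\<Prod>i<n. lam i ^ p i))"
    using assms unfolding poly_deg_lt_iff by blast
  have "exponents_lt n d \<subseteq> exponents_lt n e"
    using assms(2) by (auto simp: exponents_lt_def)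
  then have "F lam = (\<Sum>p\<in>exponents_lt n e.
      (if p \<in> exponents_lt n d then a p else 0) * (\<Prod>i<n. lam i ^ p i))" for lam
    unfolding a by (intro sum.mono_neutral_cong_left) (auto simp: finite_exponents_lt)
  then show ?thesis unfolding poly_deg_lt_iff
    by (intro exI[of _ "\<lambda>p. if p \<in> exponents_lt n d then a p else 0"]) blast
qed

lemma poly_deg_lt_const: "poly_deg_lt n (Suc d) (\<lambda>_. c)"
proof -
  let ?z = "\<lambda>_. 0 :: nat"
  have "?z \<in> exponents_lt n (Suc d)" by (simp add: exponents_lt_def)
  then have "c = (\<Sum>p\<in>exponents_lt n (Suc d). (if p = ?z then c else 0) * (\<Prod>i<n. lam i ^ p i))"
    for lam :: "nat \<Rightarrow> complex"
    by (simp add: finite_exponents_lt if_distrib[of "\<lambda>x. x * _"] cong: if_cong)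
  then show ?thesis unfolding poly_deg_lt_iff by (intro exI[of _ "\<lambda>p. if p = ?z then c else 0"]) blast
qed

lemma poly_deg_lt_coord_mult:
  assumes "poly_deg_lt n d F" and "a < n"
  shows "poly_deg_lt n (Suc d) (\<lambda>lam. lam a * F lam)"
proof -
  obtain c where c: "\<And>lam. F lam = (\<Sum>p\<in>exponents_lt n d. c p * (\<Prod>i<n. lam i ^ p i))"
    using assms unfolding poly_deg_lt_iff by blast
  define raise where "raise p = p(a := Suc (p a))" for p :: "nat \<Rightarrow> nat"
  have inj: "inj_on raise (exponents_lt n d)"
    by (rule inj_onI) (metis raise_def fun_upd_apply fun_upd_upd fun_upd_triv nat.inject)
  have "sum (raise p) {..<n} = Suc (sum p {..<n})" for p
    using \<open>a < n\<close> by (simp add: raise_def sum.remove[of "{..<n}" a])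
  then have sub: "raise ` exponents_lt n d \<subseteq> exponents_lt n (Suc d)"
    using \<open>a < n\<close> by (auto simp: exponents_lt_def raise_def)
  have raise_monomial: "lam a * (\<Prod>i<n. lam i ^ p i) = (\<Prod>i<n. lam i ^ raise p i)" for lam p
    using \<open>a < n\<close> by (simp add: raise_def prod.remove[of "{..<n}" a] mult.assoc)
  define c' where "c' q = (if q \<in> raise ` exponents_lt n d
      then c (the_inv_into (exponents_lt n d) raise q) else 0)" for q
  have "lam a * F lam = (\<Sum>q\<in>exponents_lt n (Suc d). c' q * (\<Prod>i<n. lam i ^ q i))" for lam
  proof -
    have "lam a * F lam = (\<Sum>p\<in>exponents_lt n d. c p * (\<Prod>i<n. lam i ^ raise p i))"
      by (simp add: c sum_distrib_left raise_monomial[symmetric] mult_ac)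
    also have "\<dots> = (\<Sum>q\<in>raise ` exponents_lt n d. c' q * (\<Prod>i<n. lam i ^ q i))"
      by (simp add: sum.reindex[OF inj] the_inv_into_f_f[OF inj] c'_def)
    also have "\<dots> = (\<Sum>q\<in>exponents_lt n (Suc d). c' q * (\<Prod>i<n. lam i ^ q i))"
      by (rule sum.mono_neutral_left) (use sub finite_exponents_lt in \<open>auto simp: c'_def\<close>)
    finally show ?thesis .
  qed
  then show ?thesis unfolding poly_deg_lt_iff by (intro exI[of _ c']) blast
qed

section \<open>The Harish-Chandra projection of a single word\<close>

declare hcw.simps[simp del]

definition diag_monomial :: "word \<Rightarrow> (nat \<Rightarrow> complex) \<Rightarrow> complex" where
  "diag_monomial w lam = (if \<forall>x\<in>set w. fst x = snd x then (\<Prod>x\<leftarrow>w. lam (fst x)) else 0)"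

lemma hcw_Nil: "hcw lam [] = 1"
  by (subst hcw.simps) simp

lemma hcw_snoc:
  "hcw lam (v @ [(a, b)]) =
    (if a < b then 0 else if a = b then lam a * hcw lam v
     else (\<Sum>i<length v. (if snd (v ! i) = a then hcw lam (v[i := (fst (v ! i), b)]) else 0)
                      - (if b = fst (v ! i) then hcw lam (v[i := (a, snd (v ! i))]) else 0)))"
  by (subst hcw.simps) (simp cong: if_cong)

lemma poly_deg_lt_prod_list_coords:
  "set w \<subseteq> {..<n} \<times> {..<n} \<Longrightarrow> poly_deg_lt n (Suc (length w)) (\<lambda>lam. \<Prod>x\<leftarrow>w. lam (fst x))"
  by (induction w) (auto intro: poly_deg_lt_const poly_deg_lt_coord_mult)

lemma poly_deg_lt_diag_monomial:
  "set w \<subseteq> {..<n} \<times> {..<n} \<Longrightarrow> poly_deg_lt n (Suc (length w)) (diag_monomial w)"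
  unfolding diag_monomial_def by (intro poly_deg_lt_if_zero poly_deg_lt_prod_list_coords)

lemma poly_deg_lt_hcw_minus_diag_monomial:
  "set w \<subseteq> {..<n} \<times> {..<n} \<Longrightarrow> poly_deg_lt n (length w) (\<lambda>lam. hcw lam w - diag_monomial w lam)"
proof (induction "length w" arbitrary: w rule: less_induct)
  case less
  show ?case
  proof (cases w rule: rev_exhaust)
    case Nil
    then show ?thesis by (simp add: hcw_Nil diag_monomial_def poly_deg_lt_zero)
  next
    case (snoc v x)
    obtain a b where x: "x = (a, b)" by fastforce
    have v: "set v \<subseteq> {..<n} \<times> {..<n}" and ab: "a < n" "b < n"
      using less.prems snoc x by auto
    have shorter: "poly_deg_lt n (Suc (length v)) (\<lambda>lam. hcw lam u)"
      if "length u = length v" "set u \<subseteq> {..<n} \<times> {..<n}" for u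
    proof -
      have "poly_deg_lt n (Suc (length v)) (\<lambda>lam. hcw lam u - diag_monomial u lam)"
        using less.hyps[of u] that snoc by (auto intro: poly_deg_lt_mono)
      moreover have "poly_deg_lt n (Suc (length v)) (diag_monomial u)"
        using poly_deg_lt_diag_monomial[OF that(2)] that(1) by simp
      ultimately show ?thesis using poly_deg_lt_add by fastforce
    qed
    consider "a < b" | "a = b" | "b < a" by linarith
    then show ?thesis
    proof cases
      case 1
      then show ?thesis using snoc x by (simp add: hcw_snoc diag_monomial_def poly_deg_lt_zero)
    next
      case 2
      have "poly_deg_lt n (length v) (\<lambda>lam. hcw lam v - diag_monomial v lam)"
        using less.hyps[of v] v snoc by simp
      then have "poly_deg_lt n (Suc (length v)) (\<lambda>lam. lam a * (hcw lam v - diag_monomial v lam))"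
        using ab by (intro poly_deg_lt_coord_mult)
      moreover have "hcw lam w - diag_monomial w lam = lam a * (hcw lam v - diag_monomial v lam)"
        for lam using snoc x 2 by (simp add: hcw_snoc diag_monomial_def algebra_simps)
      ultimately show ?thesis using snoc by simp
    next
      case 3
      \<comment> \<open>every commutator term is a word of length v, one letter shorter than w\<close>
      have letters: "set (v[i := (fst (v ! i), b)]) \<subseteq> {..<n} \<times> {..<n}"
        "set (v[i := (a, snd (v ! i))]) \<subseteq> {..<n} \<times> {..<n}" if "i < length v" for i
        using that v ab set_update_subset_insert[of v i] nth_mem[OF that] by fastforce+
      have "poly_deg_lt n (Suc (length v)) (\<lambda>lam. \<Sum>i<length v.
          (if snd (v ! i) = a then hcw lam (v[i := (fst (v ! i), b)]) else 0)
        - (if b = fst (v ! i) then hcw lam (v[i := (a, snd (v ! i))]) else 0))"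
        by (intro poly_deg_lt_sum poly_deg_lt_diff poly_deg_lt_if_zero shorter letters) auto
      then show ?thesis using snoc x 3 by (simp add: hcw_snoc diag_monomial_def)
    qed
  qed
qed

lemma poly_deg_lt_hcw:
  assumes "set w \<subseteq> {..<n} \<times> {..<n}"
  shows "poly_deg_lt n (Suc (length w)) (\<lambda>lam. hcw lam w)"
proof -
  have "poly_deg_lt n (Suc (length w)) (\<lambda>lam. hcw lam w - diag_monomial w lam)"
    using poly_deg_lt_hcw_minus_diag_monomial[OF assms] by (auto intro: poly_deg_lt_mono)
  from poly_deg_lt_add[OF this poly_deg_lt_diag_monomial[OF assms]] show ?thesis by simp
qed

lemma finite_words: "finite (words n k)"
proof -
  have "words n k = {xs. set xs \<subseteq> {..<n} \<times> {..<n} \<and> length xs = k}"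
    by (auto simp: words_def)
  then show ?thesis by (simp add: finite_lists_length_eq)
qed

lemma HC_bracket_yx:
  "HC (bracket_yx n m zeta j) lam =
     (\<Sum>k\<le>m. zeta k * (\<Sum>w\<in>words n k. r_elem n j k w * hcw lam w))"
proof -
  define W where "W = (\<Union>k\<le>m. words n k)"
  have fin: "finite W" unfolding W_def by (simp add: finite_words)
  have supp: "{w. bracket_yx n m zeta j w \<noteq> 0} \<subseteq> W"
  proof
    fix w assume "w \<in> {w. bracket_yx n m zeta j w \<noteq> 0}"
    then obtain k where "k \<le> m" "r_elem n j k w \<noteq> 0"
      unfolding bracket_yx_def by (metis (mono_tags, lifting) mem_Collect_eq mult_zero_right
          sum.neutral atMost_iff)
    then show "w \<in> W" unfolding W_def r_elem_def by (auto split: if_splits)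
  qed
  have "HC (bracket_yx n m zeta j) lam = (\<Sum>w\<in>W. bracket_yx n m zeta j w * hcw lam w)"
    unfolding HC_def by (rule sum.mono_neutral_left[OF fin supp]) auto
  also have "\<dots> = (\<Sum>k\<le>m. zeta k * (\<Sum>w\<in>W. r_elem n j k w * hcw lam w))"
    unfolding bracket_yx_def sum_distrib_right sum_distrib_left
    by (subst sum.swap) (simp add: mult_ac)
  also have "\<dots> = (\<Sum>k\<le>m. zeta k * (\<Sum>w\<in>words n k. r_elem n j k w * hcw lam w))"
    by (intro sum.cong refl arg_cong[where f="(*) _"] sum.mono_neutral_right[OF fin])
      (auto simp: W_def r_elem_def)
  finally show ?thesis .
qed

section \<open>Polarization of monomials\<close>

lemma card_surjections_eq_fact:
  assumes fA: "finite A" and fC: "finite C" and card_eq: "card A = card C"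
  shows "card {\<phi>\<in>A \<rightarrow>\<^sub>E C. \<phi> ` A = C} = fact (card C)"
proof -
  obtain h where h: "bij_betw h C A" using finite_same_card_bij[OF fC fA] card_eq by auto
  have h_inv: "inv_into C h (h c) = c" if "c \<in> C" for c
    using h that by (simp add: bij_betw_def inv_into_f_f)
  have inv_h: "h (inv_into C h a) = a" and inv_in: "inv_into C h a \<in> C" if "a \<in> A" for a
    using h that by (auto simp: bij_betw_def f_inv_into_f inv_into_into)
  have h_in: "h c \<in> A" if "c \<in> C" for c using h that by (auto simp: bij_betw_def)
  define F where "F \<phi> = (\<lambda>c. if c \<in> C then \<phi> (h c) else c)" for \<phi> :: "'a \<Rightarrow> 'b"
  define F' where "F' \<pi> = restrict (\<lambda>a. \<pi> (inv_into C h a)) A" for \<pi> :: "'b \<Rightarrow> 'b"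
  \<comment> \<open>a surjection between sets of equal size, transported along h, is a permutation of C\<close>
  have "bij_betw F {\<phi>\<in>A \<rightarrow>\<^sub>E C. \<phi> ` A = C} {\<pi>. \<pi> permutes C}"
  proof (rule bij_betw_byWitness[where f'=F'])
    show "\<forall>\<phi>\<in>{\<phi>\<in>A \<rightarrow>\<^sub>E C. \<phi> ` A = C}. F' (F \<phi>) = \<phi>"
      by (auto simp: F_def F'_def inv_h inv_in PiE_iff extensional_def fun_eq_iff)
    show "\<forall>\<pi>\<in>{\<pi>. \<pi> permutes C}. F (F' \<pi>) = \<pi>"
      by (auto simp: F_def F'_def h_in h_inv permutes_def fun_eq_iff)
    have "F \<phi> permutes C" if \<phi>: "\<phi> \<in> A \<rightarrow>\<^sub>E C" "\<phi> ` A = C" for \<phi>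
    proof -
      have "F \<phi> ` C = \<phi> ` (h ` C)" by (auto simp: F_def image_iff)
      also have "h ` C = A" using h by (simp add: bij_betw_def)
      finally have "F \<phi> ` C = C" using \<phi> by simp
      then have "bij_betw (F \<phi>) C C" using fC by (simp add: bij_betw_def eq_card_imp_inj_on)
      then show "F \<phi> permutes C" by (auto intro!: bij_imp_permutes simp: F_def)
    qed
    then show "F ` {\<phi>\<in>A \<rightarrow>\<^sub>E C. \<phi> ` A = C} \<subseteq> {\<pi>. \<pi> permutes C}" by blast
    have "F' \<pi> \<in> A \<rightarrow>\<^sub>E C" "F' \<pi> ` A = C" if \<pi>: "\<pi> permutes C" for \<pi>
    proof -
      show "F' \<pi> \<in> A \<rightarrow>\<^sub>E C" using \<pi> inv_in by (auto simp: F'_def permutes_in_image)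
      have "F' \<pi> ` A = \<pi> ` (inv_into C h ` A)" by (auto simp: F'_def image_iff)
      also have "inv_into C h ` A = C" using bij_betw_inv_into[OF h] by (simp add: bij_betw_def)
      finally show "F' \<pi> ` A = C" using \<pi> by (simp add: permutes_image)
    qed
    then show "F' ` {\<pi>. \<pi> permutes C} \<subseteq> {\<phi>\<in>A \<rightarrow>\<^sub>E C. \<phi> ` A = C}" by blast
  qed
  then have "card {\<phi>\<in>A \<rightarrow>\<^sub>E C. \<phi> ` A = C} = card {\<pi>. \<pi> permutes C}"
    by (rule bij_betw_same_card)
  also have "\<dots> = fact (card C)" using fC by (simp add: card_permutations)
  finally show ?thesis .
qed

lemma sum_surjections_inclusion_exclusion:
  fixes X :: "('a \<Rightarrow> 'b) \<Rightarrow> 'c::ring_1"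
  assumes "finite T" and "finite U"
  shows "(\<Sum>\<phi>\<in>{\<phi>\<in>T \<rightarrow>\<^sub>E U. \<phi> ` T = U}. X \<phi>) =
    (\<Sum>S\<in>Pow U. (-1) ^ (card U - card S) * (\<Sum>\<phi>\<in>T \<rightarrow>\<^sub>E S. X \<phi>))"
proof (rule inclusion_exclusion_mobius[OF _ assms(2),
      where f="\<lambda>W. \<Sum>\<phi>\<in>{\<phi>\<in>T \<rightarrow>\<^sub>E W. \<phi> ` T = W}. X \<phi>"
        and g="\<lambda>W. \<Sum>\<phi>\<in>T \<rightarrow>\<^sub>E W. X \<phi>"])
  fix V :: "'b set" assume "finite V"
  then have "(\<Sum>\<phi>\<in>T \<rightarrow>\<^sub>E V. X \<phi>) =
      (\<Sum>W\<in>Pow V. \<Sum>\<phi>\<in>{\<phi>\<in>T \<rightarrow>\<^sub>E V. \<phi> ` T = W}. X \<phi>)"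
    using assms(1) by (intro sum.group[symmetric]) (auto simp: finite_PiE PiE_iff)
  also have "\<dots> = (\<Sum>W\<in>Pow V. \<Sum>\<phi>\<in>{\<phi>\<in>T \<rightarrow>\<^sub>E W. \<phi> ` T = W}. X \<phi>)"
    by (intro sum.cong refl arg_cong[where f="\<lambda>A. sum X A"]) (auto simp: PiE_iff)
  finally show "(\<Sum>\<phi>\<in>T \<rightarrow>\<^sub>E V. X \<phi>) =
      (\<Sum>W\<in>Pow V. \<Sum>\<phi>\<in>{\<phi>\<in>T \<rightarrow>\<^sub>E W. \<phi> ` T = W}. X \<phi>)" .
qed

lemma prod_of_bool_eq:
  "finite A \<Longrightarrow> (\<Prod>x\<in>A. of_bool (P x)) = (of_bool (\<forall>x\<in>A. P x) :: 'a::comm_semiring_1)"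
  by (induction A rule: finite_induct) auto

lemma prod_power_eq_prod_Sigma:
  fixes n :: nat
  shows "(\<Prod>i<n. c i ^ p i) = (\<Prod>\<tau>\<in>Sigma {..<n} (\<lambda>i. {..<p i}). c (fst \<tau>))"
proof -
  have "(\<Prod>i<n. c i ^ p i) = (\<Prod>i<n. \<Prod>t<p i. c i)" by simp
  also have "\<dots> = (\<Prod>\<tau>\<in>Sigma {..<n} (\<lambda>i. {..<p i}). c (fst \<tau>))"
    by (subst prod.Sigma) (auto simp: case_prod_beta)
  finally show ?thesis .
qed

definition index_lists :: "nat \<Rightarrow> nat \<Rightarrow> nat list set" where
  "index_lists n m = {xs. set xs \<subseteq> {..<n} \<and> length xs = m}"

lemma finite_index_lists: "finite (index_lists n m)"
  by (simp add: index_lists_def finite_lists_length_eq)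

lemma sum_index_lists_matching:
  fixes lam :: "nat \<Rightarrow> 'a::comm_semiring_1"
  assumes bij: "bij_betw \<phi> T {..<m}" and lab: "lab ` T \<subseteq> {..<n}"
  shows "(\<Sum>xs\<in>index_lists n m. (\<Prod>\<tau>\<in>T. of_bool (xs ! \<phi> \<tau> = lab \<tau>)) * (\<Prod>q<m. lam (xs ! q)))
       = (\<Prod>\<tau>\<in>T. lam (lab \<tau>))"
proof -
  define xs0 where "xs0 = map (\<lambda>q. lab (inv_into T \<phi> q)) [0..<m]"
  have fT: "finite T" using bij bij_betw_finite by blast
  have inv_in: "inv_into T \<phi> q \<in> T" and \<phi>_inv: "\<phi> (inv_into T \<phi> q) = q" if "q < m" for q
    using bij that by (auto simp: bij_betw_def inv_into_into f_inv_into_f)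
  have xs0: "xs0 \<in> index_lists n m"
    using lab inv_in by (auto simp: index_lists_def xs0_def image_subset_iff)
  have matches: "(\<forall>\<tau>\<in>T. xs ! \<phi> \<tau> = lab \<tau>) \<longleftrightarrow> xs = xs0" if xs: "xs \<in> index_lists n m" for xs
  proof
    assume "\<forall>\<tau>\<in>T. xs ! \<phi> \<tau> = lab \<tau>"
    then show "xs = xs0"
      using xs inv_in \<phi>_inv by (intro nth_equalityI) (force simp: index_lists_def xs0_def)+
  next
    assume "xs = xs0"
    moreover have "\<phi> \<tau> < m" and "inv_into T \<phi> (\<phi> \<tau>) = \<tau>" if "\<tau> \<in> T" for \<tau>
      using bij that by (auto simp: bij_betw_def inv_into_f_f)
    ultimately show "\<forall>\<tau>\<in>T. xs ! \<phi> \<tau> = lab \<tau>" by (simp add: xs0_def)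
  qed
  have "(\<Sum>xs\<in>index_lists n m. (\<Prod>\<tau>\<in>T. of_bool (xs ! \<phi> \<tau> = lab \<tau>)) * (\<Prod>q<m. lam (xs ! q)))
      = (\<Sum>xs\<in>index_lists n m. of_bool (xs = xs0) * (\<Prod>q<m. lam (xs ! q)))"
    by (intro sum.cong refl) (simp add: prod_of_bool_eq[OF fT] matches)
  also have "\<dots> = (\<Prod>q<m. lam (xs0 ! q))"
    using xs0 by (simp add: finite_index_lists)
  also have "\<dots> = (\<Prod>q<m. lam (lab (inv_into T \<phi> q)))"
    by (simp add: xs0_def)
  also have "\<dots> = (\<Prod>\<tau>\<in>T. lam (lab (inv_into T \<phi> (\<phi> \<tau>))))"
    by (rule prod.reindex_bij_betw[OF bij, symmetric])
  also have "\<dots> = (\<Prod>\<tau>\<in>T. lam (lab \<tau>))"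
    using bij by (simp add: bij_betw_def inv_into_f_f)
  finally show ?thesis .
qed

text \<open>
  The inner sum over S is the polarization of the monomial c^p at the diagonal word with letters
  xs, i.e. m! times the coefficient of that word in Sym(c^p).
\<close>

lemma sum_index_lists_polarized_monomial:
  fixes lam :: "nat \<Rightarrow> 'a::comm_ring_1" and p :: "nat \<Rightarrow> nat"
  assumes "sum p {..<n} = m"
  shows "(\<Sum>xs\<in>index_lists n m.
      (\<Sum>S\<in>Pow {..<m}. (-1) ^ (m - card S) * (\<Prod>i<n. of_nat (card {q\<in>S. xs ! q = i}) ^ p i))
      * (\<Prod>q<m. lam (xs ! q))) = of_nat (fact m) * (\<Prod>i<n. lam i ^ p i)"
proof -
  define T where "T = Sigma {..<n} (\<lambda>i. {..<p i})"
  define X where "X xs \<phi> = (\<Prod>\<tau>\<in>T. of_bool (xs ! \<phi> \<tau> = fst \<tau>) :: 'a)" for xs \<phi>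
  define B where "B = {\<phi>\<in>T \<rightarrow>\<^sub>E {..<m}. \<phi> ` T = {..<m}}"
  have fT: "finite T" and card_T: "card T = m" using assms by (auto simp: T_def)
  \<comment> \<open>expand each power of a count as a sum over maps from the exponent slots T to S\<close>
  have expand: "(\<Prod>i<n. of_nat (card {q\<in>S. xs ! q = i}) ^ p i) = (\<Sum>\<phi>\<in>T \<rightarrow>\<^sub>E S. X xs \<phi>)"
    if "finite S" for S xs
  proof -
    have "(\<Prod>i<n. of_nat (card {q\<in>S. xs ! q = i}) ^ p i)
        = (\<Prod>\<tau>\<in>T. \<Sum>q\<in>S. of_bool (xs ! q = fst \<tau>) :: 'a)"
      using that by (simp add: prod_power_eq_prod_Sigma T_def Int_def)
    also have "\<dots> = (\<Sum>\<phi>\<in>T \<rightarrow>\<^sub>E S. X xs \<phi>)"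
      unfolding X_def by (rule prod_sum_PiE) (use fT that in auto)
    finally show ?thesis .
  qed
  have "(\<Sum>S\<in>Pow {..<m}. (-1) ^ (m - card S) * (\<Prod>i<n. of_nat (card {q\<in>S. xs ! q = i}) ^ p i))
      = (\<Sum>\<phi>\<in>B. X xs \<phi>)" for xs
    using sum_surjections_inclusion_exclusion[OF fT, of "{..<m}" "X xs"]
    by (simp add: B_def expand finite_subset)
  then have "(\<Sum>xs\<in>index_lists n m.
      (\<Sum>S\<in>Pow {..<m}. (-1) ^ (m - card S) * (\<Prod>i<n. of_nat (card {q\<in>S. xs ! q = i}) ^ p i))
      * (\<Prod>q<m. lam (xs ! q))) = (\<Sum>\<phi>\<in>B. \<Sum>xs\<in>index_lists n m. X xs \<phi> * (\<Prod>q<m. lam (xs ! q)))"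
    by (simp add: sum_distrib_right sum.swap[of _ "index_lists n m"])
  also have "\<dots> = (\<Sum>\<phi>\<in>B. \<Prod>\<tau>\<in>T. lam (fst \<tau>))"
  proof (intro sum.cong refl)
    fix \<phi> assume "\<phi> \<in> B"
    then have "bij_betw \<phi> T {..<m}"
      using fT card_T by (auto simp: B_def bij_betw_def intro: eq_card_imp_inj_on)
    moreover have "fst ` T \<subseteq> {..<n}" by (auto simp: T_def)
    ultimately show "(\<Sum>xs\<in>index_lists n m. X xs \<phi> * (\<Prod>q<m. lam (xs ! q))) = (\<Prod>\<tau>\<in>T. lam (fst \<tau>))"
      unfolding X_def by (rule sum_index_lists_matching)
  qed
  also have "\<dots> = of_nat (card B) * (\<Prod>\<tau>\<in>T. lam (fst \<tau>))" by simp
  also have "card B = fact m"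
    using card_surjections_eq_fact[OF fT, of "{..<m}"] card_T by (simp add: B_def)
  finally show ?thesis by (simp add: T_def prod_power_eq_prod_Sigma)
qed

section \<open>The generating coefficient on diagonal matrices\<close>

definition diagonal_mat :: "nat \<Rightarrow> (nat \<Rightarrow> 'a::zero) \<Rightarrow> 'a mat" where
  "diagonal_mat n c = mat n n (\<lambda>(i, l). if i = l then c i else 0)"

lemma diagonal_mat_power:
  fixes c :: "nat \<Rightarrow> 'a::semiring_1"
  shows "diagonal_mat n c ^\<^sub>m a = diagonal_mat n (\<lambda>i. c i ^ a)"
proof (induction a)
  case 0
  then show ?case by (auto simp: diagonal_mat_def one_mat_def)
next
  case (Suc a)
  have "diagonal_mat n (\<lambda>i. c i ^ a) * diagonal_mat n c = diagonal_mat n (\<lambda>i. c i ^ Suc a)"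
  proof (rule eq_matI)
    fix i l assume "i < dim_row (diagonal_mat n (\<lambda>i. c i ^ Suc a))"
      and "l < dim_col (diagonal_mat n (\<lambda>i. c i ^ Suc a))"
    then have il: "i < n" "l < n" by (auto simp: diagonal_mat_def)
    have "(diagonal_mat n (\<lambda>i. c i ^ a) * diagonal_mat n c) $$ (i, l)
       = (\<Sum>k\<in>{0..<n}. (if i = k then c i ^ a else 0) * (if k = l then c k else 0))"
      using il by (simp add: diagonal_mat_def scalar_prod_def)
    also have "\<dots> = (\<Sum>k\<in>{0..<n}. if k = i then (if i = l then c i ^ a * c i else 0) else 0)"
      by (rule sum.cong) auto
    finally show "(diagonal_mat n (\<lambda>i. c i ^ a) * diagonal_mat n c) $$ (i, l) =
        diagonal_mat n (\<lambda>i. c i ^ Suc a) $$ (i, l)"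
      using il by (simp add: diagonal_mat_def power_commutes)
  qed (auto simp: diagonal_mat_def)
  then show ?case using Suc by simp
qed

definition fps_geometric :: "'a::comm_semiring_1 \<Rightarrow> 'a fps" where
  "fps_geometric z = Abs_fps (\<lambda>a. z ^ a)"

lemma inverse_one_minus_const_X:
  fixes z :: "'a::field"
  shows "inverse (1 - fps_const z * fps_X) = fps_geometric z"
proof (rule fps_inverse_unique)
  have "(1 - fps_const z * fps_X) * fps_geometric z = fps_geometric z - fps_const z * (fps_X * fps_geometric z)"
    by (simp only: left_diff_distrib mult.assoc mult_1_left)
  also have "\<dots> = 1"
    by (rule fps_ext) (simp add: fps_geometric_def split: nat.split, metis Suc_pred power_Suc)
  finally show "(1 - fps_const z * fps_X) * fps_geometric z = 1" .
qed

lemma det_one_minus_X_diagonal_mat: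
  fixes c :: "nat \<Rightarrow> 'a::comm_ring_1"
  shows "det (mat n n (\<lambda>(i, l). (if i = l then 1 else 0) - fps_const (diagonal_mat n c $$ (i, l)) * fps_X))
     = (\<Prod>i<n. 1 - fps_const (c i) * fps_X)"
proof -
  have "mat n n (\<lambda>(i, l). (if i = l then 1 else 0) - fps_const (diagonal_mat n c $$ (i, l)) * fps_X)
      = mat n n (\<lambda>(i, l). if i = l then 1 - fps_const (c i) * fps_X else 0)"
    by (rule eq_matI) (auto simp: diagonal_mat_def)
  moreover have "det (mat n n (\<lambda>(i, l). if i = l then 1 - fps_const (c i) * fps_X else 0)) =
      prod_list (diag_mat (mat n n (\<lambda>(i, l). if i = l then 1 - fps_const (c i) * fps_X else 0)))"
    by (rule det_upper_triangular) (auto simp: upper_triangular_def)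
  ultimately show ?thesis by (simp add: prod_list_diag_prod atLeast0LessThan)
qed

lemma finite_multi_idx: "finite (multi_idx n k)"
  by (rule finite_subset[OF _ finite_exponents_lt[of n "Suc k"]])
    (auto simp: multi_idx_def exponents_lt_def)

lemma fps_nth_prod_geometric:
  fixes c :: "nat \<Rightarrow> 'a::comm_semiring_1"
  shows "fps_nth (\<Prod>i<n. fps_geometric (c i)) k = (\<Sum>p\<in>multi_idx n k. \<Prod>i<n. c i ^ p i)"
proof (induction n arbitrary: k)
  case 0
  have "multi_idx 0 k = (if k = 0 then {\<lambda>_. 0} else {})" by (auto simp: multi_idx_def)
  then show ?case by simp
next
  case (Suc n)
  have "fps_nth (\<Prod>i<Suc n. fps_geometric (c i)) k =
      (\<Sum>a=0..k. fps_nth (\<Prod>i<n. fps_geometric (c i)) a * c n ^ (k - a))"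
    by (simp add: fps_mult_nth fps_geometric_def)
  also have "\<dots> = (\<Sum>(a, p)\<in>Sigma {0..k} (multi_idx n). (\<Prod>i<n. c i ^ p i) * c n ^ (k - a))"
    by (simp add: Suc sum_distrib_right sum.Sigma finite_multi_idx)
  also have "\<dots> = (\<Sum>p\<in>multi_idx (Suc n) k. \<Prod>i<Suc n. c i ^ p i)"
  proof (rule sum.reindex_bij_witness[where i="\<lambda>q. (k - q n, q(n := 0))" and j="\<lambda>(a, p). p(n := k - a)"])
    fix ap assume "ap \<in> Sigma {0..k} (multi_idx n)"
    then obtain a p where ap: "ap = (a, p)" "a \<le> k" "\<forall>i\<ge>n. p i = 0" "sum p {..<n} = a"
      by (auto simp: multi_idx_def)
    have same: "(\<Prod>i<n. c i ^ (p(n := k - a)) i) = (\<Prod>i<n. c i ^ p i)"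
      "sum (p(n := k - a)) {..<n} = sum p {..<n}" by (auto intro: prod.cong sum.cong)
    show "(\<lambda>q. (k - q n, q(n := 0))) ((\<lambda>(a, p). p(n := k - a)) ap) = ap"
      using ap by (auto simp: fun_eq_iff)
    show "(\<lambda>(a, p). p(n := k - a)) ap \<in> multi_idx (Suc n) k"
      using ap same by (auto simp: multi_idx_def)
    show "(\<Prod>i<Suc n. c i ^ ((\<lambda>(a, p). p(n := k - a)) ap) i) =
        (case ap of (a, p) \<Rightarrow> (\<Prod>i<n. c i ^ p i) * c n ^ (k - a))"
      using ap same by simp
  next
    fix q assume "q \<in> multi_idx (Suc n) k"
    then have q0: "\<forall>i\<ge>Suc n. q i = 0" and qs: "sum q {..<n} + q n = k"
      by (auto simp: multi_idx_def)
    have same: "sum (q(n := 0)) {..<n} = sum q {..<n}" by (auto intro: sum.cong)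
    show "(\<lambda>(a, p). p(n := k - a)) ((\<lambda>q. (k - q n, q(n := 0))) q) = q"
      using qs by (auto simp: fun_eq_iff)
    show "(\<lambda>q. (k - q n, q(n := 0))) q \<in> Sigma {0..k} (multi_idx n)"
      using q0 qs same by (auto simp: multi_idx_def Suc_le_eq)
  qed
  finally show ?case .
qed

lemma fps_nth_geometric_mult_prod_geometric:
  fixes c :: "nat \<Rightarrow> 'a::comm_semiring_1"
  assumes "j < n"
  shows "fps_nth (fps_geometric (c j) * (\<Prod>i<n. fps_geometric (c i))) m =
    (\<Sum>p\<in>multi_idx n m. of_nat (p j + 1) * (\<Prod>i<n. c i ^ p i))"
proof -
  define others where "others p = (\<Prod>i\<in>{..<n} - {j}. c i ^ p i)" for p :: "nat \<Rightarrow> nat"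
  have j: "j \<in> {..<n}" using assms by simp
  have split_prod: "(\<Prod>i<n. c i ^ p i) = c j ^ p j * others p" for p
    unfolding others_def by (rule prod.remove[OF _ j]) simp
  have others_upd: "others (p(j := x)) = others p" for p x
    unfolding others_def by (rule prod.cong) auto
  have split_sum: "sum p {..<n} = p j + sum p ({..<n} - {j})" for p :: "nat \<Rightarrow> nat"
    by (rule sum.remove[OF _ j]) simp
  have sum_upd: "sum (p(j := x)) {..<n} = x + sum p ({..<n} - {j})" for p x
    using j by (simp add: sum.remove[of "{..<n}" j])
  have "fps_nth (fps_geometric (c j) * (\<Prod>i<n. fps_geometric (c i))) m =
      (\<Sum>a=0..m. c j ^ a * fps_nth (\<Prod>i<n. fps_geometric (c i)) (m - a))"
    by (simp add: fps_mult_nth fps_geometric_def)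
  also have "\<dots> = (\<Sum>(a, p)\<in>Sigma {0..m} (\<lambda>a. multi_idx n (m - a)). c j ^ a * (\<Prod>i<n. c i ^ p i))"
    by (simp add: fps_nth_prod_geometric sum_distrib_left sum.Sigma finite_multi_idx)
  \<comment> \<open>(a, p) corresponds to (q, b) with q = p + a e_j and b = a \<le> q_j\<close>
  also have "\<dots> = (\<Sum>(q, b)\<in>Sigma (multi_idx n m) (\<lambda>q. {0..q j}). (\<Prod>i<n. c i ^ q i))"
  proof (rule sum.reindex_bij_witness[where i="\<lambda>(q, b). (b, q(j := q j - b))"
        and j="\<lambda>(a, p). (p(j := p j + a), a)"])
    fix ap assume "ap \<in> Sigma {0..m} (\<lambda>a. multi_idx n (m - a))"
    then obtain a p where ap: "ap = (a, p)" "a \<le> m" "\<forall>i\<ge>n. p i = 0" "sum p {..<n} = m - a"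
      by (auto simp: multi_idx_def)
    show "(\<lambda>(q, b). (b, q(j := q j - b))) ((\<lambda>(a, p). (p(j := p j + a), a)) ap) = ap"
      using ap by (auto simp: fun_eq_iff)
    show "(\<lambda>(a, p). (p(j := p j + a), a)) ap \<in> Sigma (multi_idx n m) (\<lambda>q. {0..q j})"
      using ap assms split_sum[of p] sum_upd[of p "p j + a"] by (auto simp: multi_idx_def)
    show "(case (\<lambda>(a, p). (p(j := p j + a), a)) ap of (q, b) \<Rightarrow> \<Prod>i<n. c i ^ q i) =
        (case ap of (a, p) \<Rightarrow> c j ^ a * (\<Prod>i<n. c i ^ p i))"
      using ap by (simp add: split_prod others_upd power_add mult_ac)
  next
    fix qb assume "qb \<in> Sigma (multi_idx n m) (\<lambda>q. {0..q j})"
    then obtain q b where qb: "qb = (q, b)" "b \<le> q j" "\<forall>i\<ge>n. q i = 0" "sum q {..<n} = m"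
      by (auto simp: multi_idx_def)
    show "(\<lambda>(a, p). (p(j := p j + a), a)) ((\<lambda>(q, b). (b, q(j := q j - b))) qb) = qb"
      using qb by (auto simp: fun_eq_iff)
    show "(\<lambda>(q, b). (b, q(j := q j - b))) qb \<in> Sigma {0..m} (\<lambda>a. multi_idx n (m - a))"
      using qb assms split_sum[of q] sum_upd[of q "q j - b"] by (auto simp: multi_idx_def)
  qed
  also have "\<dots> = (\<Sum>q\<in>multi_idx n m. of_nat (q j + 1) * (\<Prod>i<n. c i ^ q i))"
    by (simp add: sum.Sigma[symmetric] finite_multi_idx)
  finally show ?thesis .
qed

lemma coef_fun_diagonal_mat:
  assumes "j < n"
  shows "coef_fun n j m (diagonal_mat n c) = (\<Sum>p\<in>multi_idx n m. of_nat (p j + 1) * (\<Prod>i<n. c i ^ p i))"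
proof -
  have "Abs_fps (\<lambda>a. (diagonal_mat n c ^\<^sub>m a) $$ (j, j)) = fps_geometric (c j)"
    unfolding diagonal_mat_power using assms by (simp add: diagonal_mat_def fps_geometric_def)
  moreover have "inverse (\<Prod>i<n. 1 - fps_const (c i) * fps_X) = (\<Prod>i<n. fps_geometric (c i))"
    by (simp add: inverse_prod_fps inverse_one_minus_const_X)
  ultimately show ?thesis
    unfolding coef_fun_def det_one_minus_X_diagonal_mat
    by (simp add: fps_nth_geometric_mult_prod_geometric[OF assms])
qed

section \<open>The leading term of HC(r_m)\<close>

definition diag_word :: "nat list \<Rightarrow> word" where
  "diag_word xs = map (\<lambda>i. (i, i)) xs"

lemma sum_words_diag_monomial:
  "(\<Sum>w\<in>words n m. f w * diag_monomial w lam) =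
     (\<Sum>xs\<in>index_lists n m. f (diag_word xs) * (\<Prod>q<m. lam (xs ! q)))"
proof -
  have inj: "inj_on diag_word (index_lists n m)"
    by (rule inj_onI) (auto simp: diag_word_def dest: map_injective simp: inj_on_def)
  have sub: "diag_word ` index_lists n m \<subseteq> words n m"
    by (auto simp: index_lists_def diag_word_def words_def)
  have "w \<in> diag_word ` index_lists n m" if "w \<in> words n m" "\<forall>x\<in>set w. fst x = snd x" for w
  proof
    show "w = diag_word (map fst w)"
      using that(2) unfolding diag_word_def by (induction w) (auto simp: prod_eq_iff)
    show "map fst w \<in> index_lists n m" using that(1) by (auto simp: index_lists_def words_def)
  qed
  then have "(\<Sum>w\<in>words n m. f w * diag_monomial w lam) =
      (\<Sum>w\<in>diag_word ` index_lists n m. f w * diag_monomial w lam)"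
    by (intro sum.mono_neutral_right[OF finite_words sub]) (auto simp: diag_monomial_def)
  also have "\<dots> = (\<Sum>xs\<in>index_lists n m. f (diag_word xs) * diag_monomial (diag_word xs) lam)"
    by (simp add: sum.reindex[OF inj])
  also have "\<dots> = (\<Sum>xs\<in>index_lists n m. f (diag_word xs) * (\<Prod>q<m. lam (xs ! q)))"
    by (intro sum.cong refl)
      (simp add: index_lists_def diag_monomial_def diag_word_def comp_def
        prod.list_conv_set_nth atLeast0LessThan)
  finally show ?thesis .
qed

lemma polar_coef_fun_diag_word:
  assumes "j < n" and "length xs = m"
  shows "polar n m (coef_fun n j m) (diag_word xs) =
    (\<Sum>p\<in>multi_idx n m. of_nat (p j + 1) *
      (\<Sum>S\<in>Pow {..<m}. (-1) ^ (m - card S) * (\<Prod>i<n. of_nat (card {q\<in>S. xs ! q = i}) ^ p i)))"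
proof -
  have diagonal: "mat n n (\<lambda>(i, l). of_nat (card {q\<in>S. diag_word xs ! q = (l, i)})) =
      diagonal_mat n (\<lambda>i. of_nat (card {q\<in>S. xs ! q = i}))" if "S \<subseteq> {..<m}" for S
  proof -
    have "{q\<in>S. diag_word xs ! q = (l, i)} = (if i = l then {q\<in>S. xs ! q = i} else {})" for i l
      using that assms(2) by (auto simp: diag_word_def)
    then show ?thesis unfolding diagonal_mat_def by (intro eq_matI) auto
  qed
  have "polar n m (coef_fun n j m) (diag_word xs) = (\<Sum>S\<in>Pow {..<m}. (-1) ^ (m - card S) *
      (\<Sum>p\<in>multi_idx n m. of_nat (p j + 1) * (\<Prod>i<n. of_nat (card {q\<in>S. xs ! q = i}) ^ p i)))"
    unfolding polar_def by (intro sum.cong refl) (simp add: diagonal coef_fun_diagonal_mat[OF assms(1)])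
  then show ?thesis
    by (simp add: sum_distrib_left sum.swap[of _ "Pow {..<m}"] mult_ac)
qed

lemma sum_words_r_elem_diag_monomial:
  assumes "j < n"
  shows "(\<Sum>w\<in>words n m. r_elem n j m w * diag_monomial w lam) =
    (\<Sum>p\<in>multi_idx n m. of_nat (p j + 1) * (\<Prod>i<n. lam i ^ p i))"
proof -
  define E where "E p xs = (\<Sum>S\<in>Pow {..<m}. (-1) ^ (m - card S) *
      (\<Prod>i<n. of_nat (card {q\<in>S. xs ! q = i}) ^ p i) :: complex)" for p :: "nat \<Rightarrow> nat" and xs
  have "r_elem n j m (diag_word xs) = (\<Sum>p\<in>multi_idx n m. of_nat (p j + 1) * E p xs) / fact m"
    if "xs \<in> index_lists n m" for xs
    using that polar_coef_fun_diag_word[OF assms, of xs]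
    by (auto simp: r_elem_def E_def words_def index_lists_def diag_word_def)
  then have "(\<Sum>w\<in>words n m. r_elem n j m w * diag_monomial w lam) = (\<Sum>xs\<in>index_lists n m.
      (\<Sum>p\<in>multi_idx n m. of_nat (p j + 1) * E p xs) / fact m * (\<Prod>q<m. lam (xs ! q)))"
    by (simp add: sum_words_diag_monomial)
  also have "\<dots> = (\<Sum>p\<in>multi_idx n m. of_nat (p j + 1) / fact m *
      (\<Sum>xs\<in>index_lists n m. E p xs * (\<Prod>q<m. lam (xs ! q))))"
    by (simp add: sum_distrib_left sum_distrib_right sum_divide_distrib
        sum.swap[of _ "index_lists n m"] mult_ac)
  also have "\<dots> = (\<Sum>p\<in>multi_idx n m. of_nat (p j + 1) / fact m * (fact m * (\<Prod>i<n. lam i ^ p i)))"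
    by (intro sum.cong refl)
      (simp add: E_def multi_idx_def sum_index_lists_polarized_monomial)
  also have "\<dots> = (\<Sum>p\<in>multi_idx n m. of_nat (p j + 1) * (\<Prod>i<n. lam i ^ p i))"
    by simp
  finally show ?thesis .
qed

theorem lemma2p6:
  fixes n m j :: nat and zeta :: "nat \<Rightarrow> complex"
  assumes "j < n"
  shows "\<exists>R. poly_deg_lt n m R \<and>
    (\<forall>lam. HC (bracket_yx n m zeta j) lam =
       zeta m * (\<Sum>p\<in>multi_idx n m. of_nat (p j + 1) * (\<Prod>i<n. lam i ^ p i)) + R lam)"
proof (intro exI conjI allI)
  define R where "R lam = (\<Sum>k<m. zeta k * (\<Sum>w\<in>words n k. r_elem n j k w * hcw lam w))
     + zeta m * (\<Sum>w\<in>words n m. r_elem n j m w * (hcw lam w - diag_monomial w lam))" for lam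
  show "poly_deg_lt n m R"
    unfolding R_def
    by (intro poly_deg_lt_add poly_deg_lt_cmult poly_deg_lt_sum finite_words finite_lessThan)
      (auto simp: words_def intro: poly_deg_lt_mono[OF poly_deg_lt_hcw]
        poly_deg_lt_hcw_minus_diag_monomial[of _ n, simplified])
  fix lam
  have "(\<Sum>w\<in>words n m. r_elem n j m w * hcw lam w) =
      (\<Sum>w\<in>words n m. r_elem n j m w * (hcw lam w - diag_monomial w lam))
      + (\<Sum>w\<in>words n m. r_elem n j m w * diag_monomial w lam)"
    by (simp add: sum.distrib[symmetric] algebra_simps)
  then have "HC (bracket_yx n m zeta j) lam =
      (\<Sum>k<m. zeta k * (\<Sum>w\<in>words n k. r_elem n j k w * hcw lam w))
      + zeta m * (\<Sum>w\<in>words n m. r_elem n j m w * (hcw lam w - diag_monomial w lam))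
      + zeta m * (\<Sum>w\<in>words n m. r_elem n j m w * diag_monomial w lam)"
    unfolding HC_bracket_yx lessThan_Suc_atMost[symmetric] by (simp add: algebra_simps)
  then show "HC (bracket_yx n m zeta j) lam =
      zeta m * (\<Sum>p\<in>multi_idx n m. of_nat (p j + 1) * (\<Prod>i<n. lam i ^ p i)) + R lam"
    by (simp add: R_def sum_words_r_elem_diag_monomial[OF assms])
qed

end
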